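(* The algebra $A_k$ is neither left nor right noetherian.
   Context: Let $k$ be a field. $A_k=k\langle x_1,\dots,x_7\rangle/(r_1,\dots,r_7)$, graded by $\deg x_i=1$, with $r_1=[x_2,x_3]+[x_4,x_5]+[x_6,x_7]$, $r_2=[x_3,x_1]+[x_4,x_6]+[x_7,x_5]$, $r_3=[x_1,x_2]+[x_6,x_5]+[x_7,x_4]$, $r_4=[x_5,x_1]+[x_3,x_7]+[x_6,x_2]$, $r_5=[x_1,x_4]+[x_2,x_7]+[x_3,x_6]$, $r_6=[x_7,x_1]+[x_5,x_3]+[x_2,x_4]$, $r_7=[x_1,x_6]+[x_4,x_3]+[x_5,x_2]$. *)

theory Defs
  imports "HOL-Algebra.QuotRing"
begin

datatype gen = X1 | X2 | X3 | X4 | X5 | X6 | X7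

text \<open>Free associative algebra k<x_1,...,x_7>: finitely supported functions
  from words (lists of generators) to k, with concatenation-convolution product.\<close>

definition fa_carrier :: "(gen list \<Rightarrow> 'k::field) set" where
  "fa_carrier = {f. finite {w. f w \<noteq> 0}}"

definition fa_mult :: "(gen list \<Rightarrow> 'k::field) \<Rightarrow> (gen list \<Rightarrow> 'k) \<Rightarrow> gen list \<Rightarrow> 'k" where
  "fa_mult f g = (\<lambda>w. \<Sum>i\<le>length w. f (take i w) * g (drop i w))"

definition free_alg :: "(gen list \<Rightarrow> 'k::field) ring" where
  "free_alg = \<lparr>carrier = fa_carrier, mult = fa_mult,
               one = (\<lambda>w. if w = [] then 1 else 0),
               zero = (\<lambda>w. 0), add = (\<lambda>f g w. f w + g w)\<rparr>"

definition gx :: "gen \<Rightarrow> gen list \<Rightarrow> 'k::field" where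
  "gx a = (\<lambda>w. if w = [a] then 1 else 0)"

definition comm :: "gen \<Rightarrow> gen \<Rightarrow> gen list \<Rightarrow> 'k::field" where
  "comm a b = (\<lambda>w. fa_mult (gx a) (gx b) w - fa_mult (gx b) (gx a) w)"

definition csum3 :: "(gen list \<Rightarrow> 'k::field) \<Rightarrow> (gen list \<Rightarrow> 'k) \<Rightarrow> (gen list \<Rightarrow> 'k) \<Rightarrow> gen list \<Rightarrow> 'k" where
  "csum3 f g h = (\<lambda>w. f w + g w + h w)"

definition relations :: "(gen list \<Rightarrow> 'k::field) set" where
  "relations = {
     csum3 (comm X2 X3) (comm X4 X5) (comm X6 X7),
     csum3 (comm X3 X1) (comm X4 X6) (comm X7 X5),
     csum3 (comm X1 X2) (comm X6 X5) (comm X7 X4),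
     csum3 (comm X5 X1) (comm X3 X7) (comm X6 X2),
     csum3 (comm X1 X4) (comm X2 X7) (comm X3 X6),
     csum3 (comm X7 X1) (comm X5 X3) (comm X2 X4),
     csum3 (comm X1 X6) (comm X4 X3) (comm X5 X2)}"

definition A_alg :: "(gen list \<Rightarrow> 'k::field) set ring" where
  "A_alg = free_alg Quot (genideal free_alg relations)"

definition left_ideal :: "'a set \<Rightarrow> ('a, 'b) ring_scheme \<Rightarrow> bool" where
  "left_ideal J R \<longleftrightarrow> additive_subgroup J R \<and>
     (\<forall>a\<in>carrier R. \<forall>x\<in>J. a \<otimes>\<^bsub>R\<^esub> x \<in> J)"

definition right_ideal :: "'a set \<Rightarrow> ('a, 'b) ring_scheme \<Rightarrow> bool" where
  "right_ideal J R \<longleftrightarrow> additive_subgroup J R \<and>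
     (\<forall>a\<in>carrier R. \<forall>x\<in>J. x \<otimes>\<^bsub>R\<^esub> a \<in> J)"

definition left_noetherian :: "('a, 'b) ring_scheme \<Rightarrow> bool" where
  "left_noetherian R \<longleftrightarrow> (\<forall>J :: nat \<Rightarrow> 'a set.
     (\<forall>n. left_ideal (J n) R \<and> J n \<subseteq> J (Suc n)) \<longrightarrow> (\<exists>N. \<forall>n\<ge>N. J n = J N))"

definition right_noetherian :: "('a, 'b) ring_scheme \<Rightarrow> bool" where
  "right_noetherian R \<longleftrightarrow> (\<forall>J :: nat \<Rightarrow> 'a set.
     (\<forall>n. right_ideal (J n) R \<and> J n \<subseteq> J (Suc n)) \<longrightarrow> (\<exists>N. \<forall>n\<ge>N. J n = J N))"

end

theory Submission
  imports Defs "HOL-Computational_Algebra.Polynomial"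
begin

(* Let \<epsilon> f = f [] be the augmentation of k<x_1,...,x_7> and \<tau> the algebra homomorphism
  into the commutative ring k[i][s], i^2 = -1, with x_1 \<mapsto> s, x_2 \<mapsto> i s and all other
  generators \<mapsto> 0. Put m(x_5) = 1, m(x_6) = i, m = 0 on the other generators, and let \<mu>, \<nu> be
  the k-linear maps with
    \<mu>(x_a1 ... x_an) = \<tau>(x_a1 ... x_a(n-1)) m(x_an),   \<nu>(x_a1 ... x_an) = m(x_a1) \<tau>(x_a2 ... x_an).
  Then \<mu>(fg) = \<tau>(f) \<mu>(g) + \<epsilon>(g) \<mu>(f) and \<nu>(fg) = \<nu>(f) \<tau>(g) + \<epsilon>(f) \<nu>(g), so the joint
  kernel of \<epsilon>, \<tau>, \<mu>, \<nu> is a two-sided ideal; it contains the seven relations, hence the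
  defining ideal of A_k. For each n the set {f. \<tau> f = 0 \<and> deg (\<mu> f) \<le> n} is a right ideal
  containing that kernel, and x_1^n [x_1, x_5], whose \<mu>-image is s^(n+1), lies in the next one
  but not in it. Passing to A_k gives a strictly ascending chain of right ideals; \<nu> and
  [x_1, x_5] x_1^n give a left one. *)

section \<open>Ascending chains of one-sided ideals in a quotient ring\<close>

lemma (in ideal) carrier_quotient: "carrier (R Quot I) = (+>) I ` carrier R"
  by (simp add: FactRing_def A_RCOSETS_def' UNION_singleton_eq_range)

lemma (in ideal) rcos_mult_quotient:
  assumes "x \<in> carrier R" "y \<in> carrier R"
  shows "(I +> x) \<otimes>\<^bsub>R Quot I\<^esub> (I +> y) = I +> (x \<otimes> y)"
  using rcoset_mult_add[OF assms] unfolding FactRing_def by simp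

lemma (in ideal) rcos_mem_image_iff:
  assumes J: "additive_subgroup J R" "I \<subseteq> J" and x: "x \<in> carrier R"
  shows "I +> x \<in> (+>) I ` J \<longleftrightarrow> x \<in> J"
proof
  assume "I +> x \<in> (+>) I ` J"
  then obtain j where j: "j \<in> J" "I +> x = I +> j"
    by blast
  have "x \<in> I +> j"
    using a_rcos_self[OF x] j(2) by simp
  then obtain i where i: "i \<in> I" "x = i \<oplus> j"
    by (auto simp: a_r_coset_def r_coset_def)
  have "i \<in> J"
    using i(1) J(2) by blast
  then show "x \<in> J"
    using additive_subgroup.a_closed[OF J(1) _ j(1)] i(2) by simp
next
  show "x \<in> J \<Longrightarrow> I +> x \<in> (+>) I ` J"
    by (rule imageI)
qed

lemma (in ideal) right_ideal_quotient_image: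
  assumes J: "right_ideal J R"
  shows "right_ideal ((+>) I ` J) (R Quot I)"
  unfolding right_ideal_def
proof (intro conjI ballI)
  have sub: "additive_subgroup J R"
    using J by (simp add: right_ideal_def)
  show "additive_subgroup ((+>) I ` J) (R Quot I)"
    using ring_hom_ring.img_is_add_subgroup[OF rcos_ring_hom_ring additive_subgroup.a_subgroup[OF sub]]
    by (rule additive_subgroupI)
  fix A X assume "A \<in> carrier (R Quot I)" "X \<in> (+>) I ` J"
  then obtain a j where a: "a \<in> carrier R" "A = I +> a" and j: "j \<in> J" "X = I +> j"
    unfolding carrier_quotient by blast
  have "X \<otimes>\<^bsub>R Quot I\<^esub> A = I +> (j \<otimes> a)"
    unfolding a(2) j(2) by (rule rcos_mult_quotient[OF additive_subgroup.a_Hcarr[OF sub j(1)] a(1)])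
  moreover have "j \<otimes> a \<in> J"
    using J a(1) j(1) by (simp add: right_ideal_def)
  ultimately show "X \<otimes>\<^bsub>R Quot I\<^esub> A \<in> (+>) I ` J"
    by simp
qed

lemma (in ideal) left_ideal_quotient_image:
  assumes J: "left_ideal J R"
  shows "left_ideal ((+>) I ` J) (R Quot I)"
  unfolding left_ideal_def
proof (intro conjI ballI)
  have sub: "additive_subgroup J R"
    using J by (simp add: left_ideal_def)
  show "additive_subgroup ((+>) I ` J) (R Quot I)"
    using ring_hom_ring.img_is_add_subgroup[OF rcos_ring_hom_ring additive_subgroup.a_subgroup[OF sub]]
    by (rule additive_subgroupI)
  fix A X assume "A \<in> carrier (R Quot I)" "X \<in> (+>) I ` J"
  then obtain a j where a: "a \<in> carrier R" "A = I +> a" and j: "j \<in> J" "X = I +> j"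
    unfolding carrier_quotient by blast
  have "A \<otimes>\<^bsub>R Quot I\<^esub> X = I +> (a \<otimes> j)"
    unfolding a(2) j(2) by (rule rcos_mult_quotient[OF a(1) additive_subgroup.a_Hcarr[OF sub j(1)]])
  moreover have "a \<otimes> j \<in> J"
    using J a(1) j(1) by (simp add: left_ideal_def)
  ultimately show "A \<otimes>\<^bsub>R Quot I\<^esub> X \<in> (+>) I ` J"
    by simp
qed

lemma (in ideal) quotient_image_strict_mono:
  assumes J: "additive_subgroup J R" "I \<subseteq> J" and J': "additive_subgroup J' R"
    and JJ': "J \<subset> J'"
  shows "(+>) I ` J \<subset> (+>) I ` J'"
proof (rule psubsetI)
  show "(+>) I ` J \<subseteq> (+>) I ` J'"
    using JJ' by (intro image_mono) auto
  obtain x where x: "x \<in> J'" "x \<notin> J"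
    using JJ' by auto
  have "I +> x \<notin> (+>) I ` J"
    using rcos_mem_image_iff[OF J additive_subgroup.a_Hcarr[OF J' x(1)]] x(2) by simp
  then show "(+>) I ` J \<noteq> (+>) I ` J'"
    using x(1) by auto
qed

lemma not_right_noetherianI:
  assumes "\<And>n. right_ideal (J n) R" and "\<And>n. J n \<subset> J (Suc n)"
  shows "\<not> right_noetherian R"
proof
  assume "right_noetherian R"
  then have "(\<forall>n. right_ideal (J n) R \<and> J n \<subseteq> J (Suc n)) \<longrightarrow> (\<exists>N. \<forall>n\<ge>N. J n = J N)"
    unfolding right_noetherian_def by (rule spec)
  then have "\<exists>N. \<forall>n\<ge>N. J n = J N"
    using assms by (simp add: psubset_imp_subset)
  then obtain N where "\<forall>n\<ge>N. J n = J N"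
    by blast
  then have "J (Suc N) = J N"
    using le_SucI by blast
  with assms(2)[of N] show False
    by simp
qed

lemma not_left_noetherianI:
  assumes "\<And>n. left_ideal (J n) R" and "\<And>n. J n \<subset> J (Suc n)"
  shows "\<not> left_noetherian R"
proof
  assume "left_noetherian R"
  then have "(\<forall>n. left_ideal (J n) R \<and> J n \<subseteq> J (Suc n)) \<longrightarrow> (\<exists>N. \<forall>n\<ge>N. J n = J N)"
    unfolding left_noetherian_def by (rule spec)
  then have "\<exists>N. \<forall>n\<ge>N. J n = J N"
    using assms by (simp add: psubset_imp_subset)
  then obtain N where "\<forall>n\<ge>N. J n = J N"
    by blast
  then have "J (Suc N) = J N"
    using le_SucI by blast
  with assms(2)[of N] show False
    by simp
qed

lemma (in ideal) quotient_not_right_noetherian: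
  assumes J: "\<And>n. right_ideal (J n) R" and "\<And>n. I \<subseteq> J n" and "\<And>n. J n \<subset> J (Suc n)"
  shows "\<not> right_noetherian (R Quot I)"
proof (rule not_right_noetherianI)
  show "right_ideal ((+>) I ` J n) (R Quot I)" for n
    by (rule right_ideal_quotient_image[OF J])
  show "(+>) I ` J n \<subset> (+>) I ` J (Suc n)" for n
    using assms by (intro quotient_image_strict_mono) (simp_all add: right_ideal_def)
qed

lemma (in ideal) quotient_not_left_noetherian:
  assumes J: "\<And>n. left_ideal (J n) R" and "\<And>n. I \<subseteq> J n" and "\<And>n. J n \<subset> J (Suc n)"
  shows "\<not> left_noetherian (R Quot I)"
proof (rule not_left_noetherianI)
  show "left_ideal ((+>) I ` J n) (R Quot I)" for n
    by (rule left_ideal_quotient_image[OF J])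
  show "(+>) I ` J n \<subset> (+>) I ` J (Suc n)" for n
    using assms by (intro quotient_image_strict_mono) (simp_all add: left_ideal_def)
qed

section \<open>The free algebra\<close>

lemma fa_carrier_iff: "f \<in> fa_carrier \<longleftrightarrow> finite {w. f w \<noteq> 0}"
  by (simp add: fa_carrier_def)

lemma fa_zero_carrier [simp]: "(\<lambda>w. 0) \<in> fa_carrier"
  by (simp add: fa_carrier_iff)

lemma fa_mult_support:
  "{w. fa_mult f g w \<noteq> 0} \<subseteq> (\<lambda>(u, v). u @ v) ` ({w. f w \<noteq> 0} \<times> {w. g w \<noteq> 0})"
proof
  fix w assume "w \<in> {w. fa_mult f g w \<noteq> 0}"
  then obtain i where "f (take i w) * g (drop i w) \<noteq> 0"
    unfolding fa_mult_def by (meson mem_Collect_eq sum.neutral)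
  then show "w \<in> (\<lambda>(u, v). u @ v) ` ({w. f w \<noteq> 0} \<times> {w. g w \<noteq> 0})"
    by (auto intro!: image_eqI[where x = "(take i w, drop i w)"])
qed

lemma fa_mult_closed: "f \<in> fa_carrier \<Longrightarrow> g \<in> fa_carrier \<Longrightarrow> fa_mult f g \<in> fa_carrier"
  unfolding fa_carrier_iff by (rule finite_subset[OF fa_mult_support]) auto

lemma fa_add_closed: "f \<in> fa_carrier \<Longrightarrow> g \<in> fa_carrier \<Longrightarrow> (\<lambda>w. f w + g w) \<in> fa_carrier"
  unfolding fa_carrier_iff
  by (rule finite_subset[of _ "{w. f w \<noteq> 0} \<union> {w. g w \<noteq> 0}"]) auto

lemma fa_uminus_closed: "f \<in> fa_carrier \<Longrightarrow> (\<lambda>w. - f w) \<in> fa_carrier"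
  by (simp add: fa_carrier_iff)

lemma fa_diff_closed: "f \<in> fa_carrier \<Longrightarrow> g \<in> fa_carrier \<Longrightarrow> (\<lambda>w. f w - g w) \<in> fa_carrier"
  using fa_add_closed[OF _ fa_uminus_closed, of f g] by simp

lemma fa_mult_assoc: "fa_mult (fa_mult f g) h = fa_mult f (fa_mult g h)"
proof
  fix w :: "gen list"
  define n where "n = length w"
  define F where "F j i = f (take j w) * g (take (i - j) (drop j w)) * h (drop i w)" for j i
  have L: "fa_mult (fa_mult f g) h w = (\<Sum>i\<le>n. \<Sum>j\<in>{j\<in>{..n}. j \<le> i}. F j i)"
    unfolding fa_mult_def n_def
  proof (rule sum.cong[OF refl])
    fix i assume i: "i \<in> {..length w}"
    then have "{j\<in>{..length w}. j \<le> i} = {..i}" by auto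
    with i show "(\<Sum>j\<le>length (take i w). f (take j (take i w)) * g (drop j (take i w))) * h (drop i w)
        = (\<Sum>j\<in>{j\<in>{..length w}. j \<le> i}. F j i)"
      by (auto simp: F_def sum_distrib_right min_def take_take drop_take intro!: sum.cong)
  qed
  have R: "fa_mult f (fa_mult g h) w = (\<Sum>j\<le>n. \<Sum>i\<in>{i\<in>{..n}. j \<le> i}. F j i)"
    unfolding fa_mult_def n_def
  proof (rule sum.cong[OF refl])
    fix j assume j: "j \<in> {..length w}"
    have "(\<Sum>l\<le>length (drop j w). g (take l (drop j w)) * h (drop l (drop j w)))
        = (\<Sum>l\<le>length w - j. g (take (l + j - j) (drop j w)) * h (drop (l + j) w))"
      by (simp add: add.commute)
    also have "\<dots> = (\<Sum>i\<in>(\<lambda>l. l + j) ` {..length w - j}. g (take (i - j) (drop j w)) * h (drop i w))"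
      by (subst sum.reindex) (auto simp: inj_on_def)
    also have "(\<lambda>l. l + j) ` {..length w - j} = {i\<in>{..length w}. j \<le> i}"
      using j by (auto simp: image_iff) (metis atMost_iff diff_le_mono le_add_diff_inverse2)
    finally show "f (take j w) * (\<Sum>l\<le>length (drop j w). g (take l (drop j w)) * h (drop l (drop j w)))
        = (\<Sum>i\<in>{i\<in>{..length w}. j \<le> i}. F j i)"
      by (simp add: F_def sum_distrib_left mult.assoc)
  qed
  show "fa_mult (fa_mult f g) h w = fa_mult f (fa_mult g h) w"
    unfolding L R by (rule sum.swap_restrict) auto
qed

lemma fa_mult_one_left: "fa_mult (\<lambda>w. if w = [] then 1 else 0) f = f"
proof
  fix w :: "gen list"
  have "fa_mult (\<lambda>w. if w = [] then 1 else 0) f w = (\<Sum>i\<le>length w. if i = 0 then f w else 0)"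
    unfolding fa_mult_def by (rule sum.cong) auto
  then show "fa_mult (\<lambda>w. if w = [] then 1 else 0) f w = f w" by simp
qed

lemma fa_mult_one_right: "fa_mult f (\<lambda>w. if w = [] then 1 else 0) = f"
proof
  fix w :: "gen list"
  have "fa_mult f (\<lambda>w. if w = [] then 1 else 0) w = (\<Sum>i\<le>length w. if i = length w then f w else 0)"
    unfolding fa_mult_def by (rule sum.cong) auto
  then show "fa_mult f (\<lambda>w. if w = [] then 1 else 0) w = f w" by simp
qed

lemma fa_mult_add_left: "fa_mult (\<lambda>w. f w + g w) h = (\<lambda>w. fa_mult f h w + fa_mult g h w)"
  unfolding fa_mult_def by (auto simp: algebra_simps sum.distrib)

lemma fa_mult_add_right: "fa_mult h (\<lambda>w. f w + g w) = (\<lambda>w. fa_mult h f w + fa_mult h g w)"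
  unfolding fa_mult_def by (auto simp: algebra_simps sum.distrib)

lemma fa_mult_Nil [simp]: "fa_mult f g [] = f [] * g []"
  by (simp add: fa_mult_def)

lemma ring_free_alg: "ring (free_alg :: (gen list \<Rightarrow> 'k::field) ring)"
proof (rule ringI)
  show "abelian_group (free_alg :: (gen list \<Rightarrow> 'k) ring)"
  proof (rule abelian_groupI)
    fix x :: "gen list \<Rightarrow> 'k" assume "x \<in> carrier free_alg"
    then show "\<exists>y\<in>carrier free_alg. y \<oplus>\<^bsub>free_alg\<^esub> x = \<zero>\<^bsub>free_alg\<^esub>"
      by (auto simp: free_alg_def fa_carrier_iff intro!: bexI[of _ "\<lambda>w. - x w"])
  qed (auto simp: free_alg_def fa_carrier_iff fa_add_closed[unfolded fa_carrier_iff] algebra_simps)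
  show "monoid (free_alg :: (gen list \<Rightarrow> 'k) ring)"
    by (rule monoidI)
      (auto simp: free_alg_def fa_mult_closed fa_mult_assoc fa_mult_one_left fa_mult_one_right,
        simp add: fa_carrier_iff)
qed (auto simp: free_alg_def fa_mult_add_left fa_mult_add_right)

lemma free_alg_simps [simp]:
  "carrier free_alg = fa_carrier" "monoid.mult free_alg = fa_mult"
  by (simp_all add: free_alg_def)

lemma additive_subgroup_free_algI:
  assumes "S \<subseteq> fa_carrier" "(\<lambda>w. 0) \<in> S"
    and "\<And>f g. f \<in> S \<Longrightarrow> g \<in> S \<Longrightarrow> (\<lambda>w. f w + g w) \<in> S"
    and "\<And>f. f \<in> S \<Longrightarrow> (\<lambda>w. - f w) \<in> S"
  shows "additive_subgroup S (free_alg :: (gen list \<Rightarrow> 'k::field) ring)"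
proof -
  interpret ring "free_alg :: (gen list \<Rightarrow> 'k) ring" by (rule ring_free_alg)
  have "\<ominus>\<^bsub>free_alg\<^esub> f = (\<lambda>w. - f w)" if "f \<in> fa_carrier" for f :: "gen list \<Rightarrow> 'k"
    by (rule minus_equality) (use that in \<open>auto simp: free_alg_def fa_uminus_closed\<close>)
  then show ?thesis
    using assms by (intro additive_subgroupI add.subgroupI) (auto simp: free_alg_def)
qed

section \<open>Polynomials over the Gaussian extension of a field\<close>

(* k[i] with i^2 = -1, adjoined formally so that the construction works over every field. *)
datatype 'a gauss = Gauss (re: 'a) (im: 'a)

instantiation gauss :: (comm_ring_1) comm_ring_1
begin
definition "0 = Gauss 0 0"
definition "1 = Gauss 1 0"
definition "x + y = Gauss (re x + re y) (im x + im y)"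
definition "x - y = Gauss (re x - re y) (im x - im y)"
definition "- x = Gauss (- re x) (- im x)"
definition "x * y = Gauss (re x * re y - im x * im y) (re x * im y + im x * re y)"
instance
  by intro_classes
    (auto intro!: gauss.expand simp: zero_gauss_def one_gauss_def plus_gauss_def minus_gauss_def
       uminus_gauss_def times_gauss_def algebra_simps)
end

lemma gauss_simps [simp]:
  "re 0 = 0" "im 0 = 0" "re 1 = 1" "im 1 = 0"
  "re (x + y) = re x + re y" "im (x + y) = im x + im y"
  "re (- x) = - re x" "im (- x) = - im x"
  "re (x * y) = re x * re y - im x * im y" "im (x * y) = re x * im y + im x * re y"
  by (simp_all add: zero_gauss_def one_gauss_def plus_gauss_def uminus_gauss_def times_gauss_def)

lemma gauss_eq_iff: "x = y \<longleftrightarrow> re x = re y \<and> im x = im y"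
  by (auto intro: gauss.expand)

definition scalar :: "'k::field \<Rightarrow> 'k gauss poly" where
  "scalar c = [:Gauss c 0:]"

lemma scalar_simps [simp]:
  "scalar 0 = 0" "scalar 1 = 1" "scalar (a + b) = scalar a + scalar b"
  "scalar (a * b) = scalar a * scalar b" "scalar (- a) = - scalar a"
  by (simp_all add: scalar_def gauss_eq_iff flip: pCons_one)

lemma scalar_sum: "scalar (sum f A) = (\<Sum>x\<in>A. scalar (f x))"
  by (induction A rule: infinite_finite_induct) auto

definition gauss_i :: "'k::field gauss poly" where
  "gauss_i = [:Gauss 0 1:]"

lemma gauss_i_squared: "gauss_i * gauss_i = (- 1 :: 'k::field gauss poly)"
  by (simp add: gauss_i_def gauss_eq_iff flip: pCons_one)

lemma degree_scalar_mult: "degree (scalar c * p) \<le> degree p"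
  using degree_mult_le[of "scalar c" p] by (simp add: scalar_def)

section \<open>The twisted derivations\<close>

definition lin_ext :: "(gen list \<Rightarrow> 'k gauss poly) \<Rightarrow> (gen list \<Rightarrow> 'k::field) \<Rightarrow> 'k gauss poly" where
  "lin_ext H f = (\<Sum>w\<in>{w. f w \<noteq> 0}. scalar (f w) * H w)"

lemma lin_ext_superset:
  assumes "finite A" "{w. f w \<noteq> 0} \<subseteq> A"
  shows "lin_ext H f = (\<Sum>w\<in>A. scalar (f w) * H w)"
  unfolding lin_ext_def by (rule sum.mono_neutral_left) (use assms in auto)

lemma lin_ext_zero [simp]: "lin_ext H (\<lambda>w. 0) = 0"
  by (simp add: lin_ext_def)

lemma lin_ext_add:
  assumes "f \<in> fa_carrier" "g \<in> fa_carrier"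
  shows "lin_ext H (\<lambda>w. f w + g w) = lin_ext H f + lin_ext H g"
proof -
  let ?A = "{w. f w \<noteq> 0} \<union> {w. g w \<noteq> 0}"
  have A: "finite ?A" using assms by (simp add: fa_carrier_iff)
  have "lin_ext H (\<lambda>w. f w + g w) = (\<Sum>w\<in>?A. scalar (f w + g w) * H w)"
    by (rule lin_ext_superset[OF A]) auto
  also have "\<dots> = (\<Sum>w\<in>?A. scalar (f w) * H w) + (\<Sum>w\<in>?A. scalar (g w) * H w)"
    by (simp add: algebra_simps sum.distrib)
  also have "\<dots> = lin_ext H f + lin_ext H g"
    by (simp add: lin_ext_superset[OF A])
  finally show ?thesis .
qed

lemma lin_ext_uminus: "lin_ext H (\<lambda>w. - f w) = - lin_ext H f"
  unfolding lin_ext_def by (simp add: sum_negf)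

lemma lin_ext_diff:
  assumes "f \<in> fa_carrier" "g \<in> fa_carrier"
  shows "lin_ext H (\<lambda>w. f w - g w) = lin_ext H f - lin_ext H g"
  using lin_ext_add[OF assms(1) fa_uminus_closed[OF assms(2)]] lin_ext_uminus[of H g] by simp

lemma sum_over_concatenations:
  fixes F :: "gen list \<Rightarrow> gen list \<Rightarrow> 'a::comm_monoid_add"
  assumes A: "finite A" and B: "finite B" and F: "\<And>u v. u \<notin> A \<or> v \<notin> B \<Longrightarrow> F u v = 0"
  shows "(\<Sum>w\<in>(\<lambda>(u, v). u @ v) ` (A \<times> B). \<Sum>i\<le>length w. F (take i w) (drop i w))
       = (\<Sum>u\<in>A. \<Sum>v\<in>B. F u v)"
proof -
  let ?S = "Sigma ((\<lambda>(u, v). u @ v) ` (A \<times> B)) (\<lambda>w. {..length w})"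
  let ?D = "(\<lambda>(u, v). (u @ v, length u)) ` (A \<times> B)"
  have "(\<Sum>w\<in>(\<lambda>(u, v). u @ v) ` (A \<times> B). \<Sum>i\<le>length w. F (take i w) (drop i w))
      = (\<Sum>(w, i)\<in>?S. F (take i w) (drop i w))"
    by (rule sum.Sigma) (use A B in auto)
  also have "\<dots> = (\<Sum>(w, i)\<in>?D. F (take i w) (drop i w))"
  proof (rule sum.mono_neutral_right)
    show "\<forall>x\<in>?S - ?D. (case x of (w, i) \<Rightarrow> F (take i w) (drop i w)) = 0"
    proof
      fix x assume x: "x \<in> ?S - ?D"
      obtain w i where wi: "x = (w, i)" by fastforce
      then have "x = (\<lambda>(u, v). (u @ v, length u)) (take i w, drop i w)" using x by auto
      then have "\<not> (take i w \<in> A \<and> drop i w \<in> B)" using x by blast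
      then show "(case x of (w, i) \<Rightarrow> F (take i w) (drop i w)) = 0" using F wi by simp
    qed
  qed (use A B in auto)
  also have "\<dots> = (\<Sum>(u, v)\<in>A \<times> B. F u v)"
    by (subst sum.reindex) (auto simp: inj_on_def intro!: sum.cong)
  also have "\<dots> = (\<Sum>u\<in>A. \<Sum>v\<in>B. F u v)"
    by (rule sum.cartesian_product[symmetric])
  finally show ?thesis .
qed

lemma lin_ext_fa_mult:
  assumes f: "f \<in> fa_carrier" and g: "g \<in> fa_carrier"
  shows "lin_ext H (fa_mult f g)
    = (\<Sum>u\<in>{w. f w \<noteq> 0}. \<Sum>v\<in>{w. g w \<noteq> 0}. scalar (f u) * scalar (g v) * H (u @ v))"
proof -
  let ?A = "{w. f w \<noteq> 0}" and ?B = "{w. g w \<noteq> 0}"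
  have A: "finite ?A" and B: "finite ?B" using f g by (auto simp: fa_carrier_iff)
  have "lin_ext H (fa_mult f g) = (\<Sum>w\<in>(\<lambda>(u, v). u @ v) ` (?A \<times> ?B). scalar (fa_mult f g w) * H w)"
    by (rule lin_ext_superset) (use A B fa_mult_support in auto)
  also have "\<dots> = (\<Sum>w\<in>(\<lambda>(u, v). u @ v) ` (?A \<times> ?B). \<Sum>i\<le>length w.
      scalar (f (take i w)) * scalar (g (drop i w)) * H (take i w @ drop i w))"
    by (simp add: fa_mult_def scalar_sum sum_distrib_right)
  also have "\<dots> = (\<Sum>u\<in>?A. \<Sum>v\<in>?B. scalar (f u) * scalar (g v) * H (u @ v))"
    by (rule sum_over_concatenations[OF A B]) auto
  finally show ?thesis .
qed

lemma sum_scalar_at_Nil: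
  "finite {w. g w \<noteq> 0} \<Longrightarrow> (\<Sum>v\<in>{w. g w \<noteq> 0}. scalar (g v) * (if v = [] then 1 else 0)) = scalar (g [])"
  by (cases "g [] = 0") (auto simp: if_distrib sum.delta cong: if_cong)

(* The only relations not killed by \<mu> and \<nu> term by term are r_4 and r_7; there the two
  nonzero terms cancel because i^2 = -1. *)
fun tau_gen :: "gen \<Rightarrow> 'k::field gauss poly" where
  "tau_gen X1 = monom 1 1" | "tau_gen X2 = gauss_i * monom 1 1" | "tau_gen _ = 0"

fun mu_gen :: "gen \<Rightarrow> 'k::field gauss poly" where
  "mu_gen X5 = 1" | "mu_gen X6 = gauss_i" | "mu_gen _ = 0"

definition tau_word :: "gen list \<Rightarrow> 'k::field gauss poly" where
  "tau_word w = prod_list (map tau_gen w)"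

definition mu_word :: "gen list \<Rightarrow> 'k::field gauss poly" where
  "mu_word w = (if w = [] then 0 else tau_word (butlast w) * mu_gen (last w))"

definition nu_word :: "gen list \<Rightarrow> 'k::field gauss poly" where
  "nu_word w = (if w = [] then 0 else mu_gen (hd w) * tau_word (tl w))"

abbreviation tau :: "(gen list \<Rightarrow> 'k::field) \<Rightarrow> 'k gauss poly" where
  "tau \<equiv> lin_ext tau_word"

abbreviation mu :: "(gen list \<Rightarrow> 'k::field) \<Rightarrow> 'k gauss poly" where
  "mu \<equiv> lin_ext mu_word"

abbreviation nu :: "(gen list \<Rightarrow> 'k::field) \<Rightarrow> 'k gauss poly" where
  "nu \<equiv> lin_ext nu_word"

lemma tau_word_append: "tau_word (u @ v) = tau_word u * tau_word v"
  by (simp add: tau_word_def)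

lemma mu_word_append: "mu_word (u @ v) = tau_word u * mu_word v + (if v = [] then mu_word u else 0)"
  by (auto simp: mu_word_def tau_word_append butlast_append)

lemma nu_word_append: "nu_word (u @ v) = nu_word u * tau_word v + (if u = [] then nu_word v else 0)"
  by (cases u) (auto simp: nu_word_def tau_word_def)

lemma tau_fa_mult:
  assumes "f \<in> fa_carrier" "g \<in> fa_carrier"
  shows "tau (fa_mult f g) = tau f * tau g"
proof -
  have "tau (fa_mult f g) = (\<Sum>u\<in>{w. f w \<noteq> 0}. \<Sum>v\<in>{w. g w \<noteq> 0}.
      (scalar (f u) * tau_word u) * (scalar (g v) * tau_word v))"
    by (simp add: lin_ext_fa_mult[OF assms] tau_word_append algebra_simps)
  then show ?thesis by (simp only: lin_ext_def sum_product)
qed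

lemma mu_fa_mult:
  assumes f: "f \<in> fa_carrier" and g: "g \<in> fa_carrier"
  shows "mu (fa_mult f g) = tau f * mu g + scalar (g []) * mu f"
proof -
  let ?A = "{w. f w \<noteq> 0}" and ?B = "{w. g w \<noteq> 0}"
  have B: "finite ?B" using g by (simp add: fa_carrier_iff)
  have "mu (fa_mult f g) = (\<Sum>u\<in>?A. \<Sum>v\<in>?B. (scalar (f u) * tau_word u) * (scalar (g v) * mu_word v)
      + (scalar (f u) * mu_word u) * (scalar (g v) * (if v = [] then 1 else 0)))"
    by (auto simp: lin_ext_fa_mult[OF f g] mu_word_append algebra_simps intro!: sum.cong)
  also have "\<dots> = (\<Sum>u\<in>?A. \<Sum>v\<in>?B. (scalar (f u) * tau_word u) * (scalar (g v) * mu_word v))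
      + (\<Sum>u\<in>?A. (scalar (f u) * mu_word u) * (\<Sum>v\<in>?B. scalar (g v) * (if v = [] then 1 else 0)))"
    by (simp add: sum.distrib sum_distrib_left)
  also have "\<dots> = tau f * mu g
      + (\<Sum>u\<in>?A. (scalar (f u) * mu_word u) * (\<Sum>v\<in>?B. scalar (g v) * (if v = [] then 1 else 0)))"
    by (simp only: lin_ext_def sum_product)
  also have "\<dots> = tau f * mu g + scalar (g []) * mu f"
    by (simp add: sum_scalar_at_Nil[OF B] lin_ext_def sum_distrib_left algebra_simps)
  finally show ?thesis .
qed

lemma nu_fa_mult:
  assumes f: "f \<in> fa_carrier" and g: "g \<in> fa_carrier"
  shows "nu (fa_mult f g) = nu f * tau g + scalar (f []) * nu g"
proof -
  let ?A = "{w. f w \<noteq> 0}" and ?B = "{w. g w \<noteq> 0}"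
  have A: "finite ?A" using f by (simp add: fa_carrier_iff)
  have "nu (fa_mult f g) = (\<Sum>u\<in>?A. \<Sum>v\<in>?B. (scalar (f u) * nu_word u) * (scalar (g v) * tau_word v)
      + (scalar (g v) * nu_word v) * (scalar (f u) * (if u = [] then 1 else 0)))"
    by (auto simp: lin_ext_fa_mult[OF f g] nu_word_append algebra_simps intro!: sum.cong)
  also have "\<dots> = (\<Sum>u\<in>?A. \<Sum>v\<in>?B. (scalar (f u) * nu_word u) * (scalar (g v) * tau_word v))
      + (\<Sum>v\<in>?B. (scalar (g v) * nu_word v) * (\<Sum>u\<in>?A. scalar (f u) * (if u = [] then 1 else 0)))"
    by (simp add: sum.distrib sum_distrib_left sum.swap[of _ ?A])
  also have "\<dots> = nu f * tau g
      + (\<Sum>v\<in>?B. (scalar (g v) * nu_word v) * (\<Sum>u\<in>?A. scalar (f u) * (if u = [] then 1 else 0)))"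
    by (simp only: lin_ext_def sum_product)
  also have "\<dots> = nu f * tau g + scalar (f []) * nu g"
    by (simp add: sum_scalar_at_Nil[OF A] lin_ext_def sum_distrib_left algebra_simps)
  finally show ?thesis .
qed

section \<open>An ideal containing the relations\<close>

lemma gx_carrier: "gx a \<in> fa_carrier"
  unfolding fa_carrier_iff gx_def by (rule finite_subset[of _ "{[a]}"]) auto

lemma gx_Nil [simp]: "gx a [] = 0"
  by (simp add: gx_def)

lemma comm_carrier: "comm a b \<in> fa_carrier"
  unfolding comm_def by (intro fa_diff_closed fa_mult_closed gx_carrier)

lemma comm_Nil [simp]: "comm a b [] = 0"
  by (simp add: comm_def)

lemma lin_ext_gx: "lin_ext H (gx a) = H [a]"
proof -
  have "lin_ext H (gx a) = (\<Sum>w\<in>{[a]}. scalar (gx a w) * H w)"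
    by (rule lin_ext_superset) (auto simp: gx_def)
  then show ?thesis by (simp add: gx_def)
qed

lemma lin_ext_comm:
  "lin_ext H (comm a b) = lin_ext H (fa_mult (gx a) (gx b)) - lin_ext H (fa_mult (gx b) (gx a))"
  unfolding comm_def by (intro lin_ext_diff fa_mult_closed gx_carrier)

lemma word_maps_single [simp]: "tau_word [a] = tau_gen a" "mu_word [a] = mu_gen a" "nu_word [a] = mu_gen a"
  by (simp_all add: tau_word_def mu_word_def nu_word_def)

lemma tau_comm: "tau (comm a b) = 0"
  by (simp add: lin_ext_comm tau_fa_mult gx_carrier lin_ext_gx)

lemma mu_comm: "mu (comm a b) = tau_gen a * mu_gen b - tau_gen b * mu_gen a"
  by (simp add: lin_ext_comm mu_fa_mult gx_carrier lin_ext_gx)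

lemma nu_comm: "nu (comm a b) = mu_gen a * tau_gen b - mu_gen b * tau_gen a"
  by (simp add: lin_ext_comm nu_fa_mult gx_carrier lin_ext_gx)

definition joint_kernel :: "(gen list \<Rightarrow> 'k::field) set" where
  "joint_kernel = {f \<in> fa_carrier. f [] = 0 \<and> tau f = 0 \<and> mu f = 0 \<and> nu f = 0}"

lemma ideal_joint_kernel: "ideal joint_kernel (free_alg :: (gen list \<Rightarrow> 'k::field) ring)"
proof (rule idealI[OF ring_free_alg additive_subgroup.a_subgroup])
  show "additive_subgroup joint_kernel (free_alg :: (gen list \<Rightarrow> 'k) ring)"
    by (rule additive_subgroup_free_algI)
      (auto simp: joint_kernel_def fa_add_closed fa_uminus_closed lin_ext_add lin_ext_uminus)
next
  fix f x :: "gen list \<Rightarrow> 'k" assume f: "f \<in> joint_kernel" and "x \<in> carrier free_alg"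
  then have x: "x \<in> fa_carrier" and fc: "f \<in> fa_carrier" by (simp_all add: joint_kernel_def)
  show "x \<otimes>\<^bsub>free_alg\<^esub> f \<in> joint_kernel" "f \<otimes>\<^bsub>free_alg\<^esub> x \<in> joint_kernel"
    using f by (simp_all add: joint_kernel_def fa_mult_closed x fc tau_fa_mult mu_fa_mult nu_fa_mult)
qed

lemma csum3_carrier:
  "f \<in> fa_carrier \<Longrightarrow> g \<in> fa_carrier \<Longrightarrow> h \<in> fa_carrier \<Longrightarrow> csum3 f g h \<in> fa_carrier"
  unfolding csum3_def by (intro fa_add_closed)

lemma csum3_Nil [simp]: "csum3 f g h [] = f [] + g [] + h []"
  by (simp add: csum3_def)

lemma lin_ext_csum3:
  "f \<in> fa_carrier \<Longrightarrow> g \<in> fa_carrier \<Longrightarrow> h \<in> fa_carrier \<Longrightarrow>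
    lin_ext H (csum3 f g h) = lin_ext H f + lin_ext H g + lin_ext H h"
  unfolding csum3_def by (simp add: lin_ext_add fa_add_closed)

lemma relations_subset_joint_kernel: "relations \<subseteq> (joint_kernel :: (gen list \<Rightarrow> 'k::field) set)"
proof -
  have gauss_i_twice: "gauss_i * (gauss_i * p) = - (p :: 'k gauss poly)" for p
    by (simp add: mult.assoc[symmetric] gauss_i_squared)
  show ?thesis
    unfolding relations_def joint_kernel_def
    by (simp add: csum3_carrier comm_carrier lin_ext_csum3 tau_comm mu_comm nu_comm
        algebra_simps gauss_i_twice)
qed

lemma genideal_relations_subset: "genideal free_alg relations \<subseteq> (joint_kernel :: (gen list \<Rightarrow> 'k::field) set)"
  by (rule ring.genideal_minimal[OF ring_free_alg ideal_joint_kernel relations_subset_joint_kernel])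

lemma ideal_genideal_relations: "ideal (genideal free_alg relations) (free_alg :: (gen list \<Rightarrow> 'k::field) ring)"
  using relations_subset_joint_kernel
  by (intro ring.genideal_ideal[OF ring_free_alg]) (auto simp: joint_kernel_def)

definition mu_degree_le :: "nat \<Rightarrow> (gen list \<Rightarrow> 'k::field) set" where
  "mu_degree_le n = {f \<in> fa_carrier. tau f = 0 \<and> degree (mu f) \<le> n}"

definition nu_degree_le :: "nat \<Rightarrow> (gen list \<Rightarrow> 'k::field) set" where
  "nu_degree_le n = {f \<in> fa_carrier. tau f = 0 \<and> degree (nu f) \<le> n}"

lemma right_ideal_mu_degree_le: "right_ideal (mu_degree_le n) (free_alg :: (gen list \<Rightarrow> 'k::field) ring)"
  unfolding right_ideal_def
proof (intro conjI ballI)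
  show "additive_subgroup (mu_degree_le n) (free_alg :: (gen list \<Rightarrow> 'k) ring)"
    by (rule additive_subgroup_free_algI)
      (auto simp: mu_degree_le_def fa_add_closed fa_uminus_closed lin_ext_add lin_ext_uminus
        intro: degree_add_le)
  fix x f :: "gen list \<Rightarrow> 'k" assume "x \<in> carrier free_alg" "f \<in> mu_degree_le n"
  then have x: "x \<in> fa_carrier" and f: "f \<in> fa_carrier" "tau f = 0" "degree (mu f) \<le> n"
    by (simp_all add: mu_degree_le_def)
  have "degree (mu (fa_mult f x)) \<le> n"
    using degree_scalar_mult[of "x []" "mu f"] f by (simp add: mu_fa_mult x)
  then show "f \<otimes>\<^bsub>free_alg\<^esub> x \<in> mu_degree_le n"
    using f x by (simp add: mu_degree_le_def fa_mult_closed tau_fa_mult)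
qed

lemma left_ideal_nu_degree_le: "left_ideal (nu_degree_le n) (free_alg :: (gen list \<Rightarrow> 'k::field) ring)"
  unfolding left_ideal_def
proof (intro conjI ballI)
  show "additive_subgroup (nu_degree_le n) (free_alg :: (gen list \<Rightarrow> 'k) ring)"
    by (rule additive_subgroup_free_algI)
      (auto simp: nu_degree_le_def fa_add_closed fa_uminus_closed lin_ext_add lin_ext_uminus
        intro: degree_add_le)
  fix x f :: "gen list \<Rightarrow> 'k" assume "x \<in> carrier free_alg" "f \<in> nu_degree_le n"
  then have x: "x \<in> fa_carrier" and f: "f \<in> fa_carrier" "tau f = 0" "degree (nu f) \<le> n"
    by (simp_all add: nu_degree_le_def)
  have "degree (nu (fa_mult x f)) \<le> n"
    using degree_scalar_mult[of "x []" "nu f"] f by (simp add: nu_fa_mult x)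
  then show "x \<otimes>\<^bsub>free_alg\<^esub> f \<in> nu_degree_le n"
    using f x by (simp add: nu_degree_le_def fa_mult_closed tau_fa_mult)
qed

primrec mu_witness :: "nat \<Rightarrow> gen list \<Rightarrow> 'k::field" where
  "mu_witness 0 = comm X1 X5"
| "mu_witness (Suc m) = fa_mult (gx X1) (mu_witness m)"

primrec nu_witness :: "nat \<Rightarrow> gen list \<Rightarrow> 'k::field" where
  "nu_witness 0 = comm X1 X5"
| "nu_witness (Suc m) = fa_mult (nu_witness m) (gx X1)"

lemma mu_witness_spec:
  fixes m :: nat
  shows "(mu_witness m :: gen list \<Rightarrow> 'k::field) \<in> fa_carrier \<and>
    tau (mu_witness m :: gen list \<Rightarrow> 'k) = 0 \<and> mu (mu_witness m :: gen list \<Rightarrow> 'k) = monom 1 (Suc m)"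
proof (induction m)
  case (Suc m)
  then show ?case
    by (simp add: fa_mult_closed gx_carrier tau_fa_mult mu_fa_mult lin_ext_gx mult_monom)
qed (simp add: comm_carrier tau_comm mu_comm)

lemma nu_witness_spec:
  fixes m :: nat
  shows "(nu_witness m :: gen list \<Rightarrow> 'k::field) \<in> fa_carrier \<and>
    tau (nu_witness m :: gen list \<Rightarrow> 'k) = 0 \<and> nu (nu_witness m :: gen list \<Rightarrow> 'k) = - monom 1 (Suc m)"
proof (induction m)
  case (Suc m)
  then show ?case
    by (simp add: fa_mult_closed gx_carrier tau_fa_mult nu_fa_mult lin_ext_gx mult_monom)
qed (simp add: comm_carrier tau_comm nu_comm)

lemma mu_degree_le_strict_mono: "mu_degree_le n \<subset> (mu_degree_le (Suc n) :: (gen list \<Rightarrow> 'k::field) set)"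
proof -
  have "mu_witness n \<in> mu_degree_le (Suc n) - (mu_degree_le n :: (gen list \<Rightarrow> 'k) set)"
    using mu_witness_spec[of n, where 'k='k] by (simp add: mu_degree_le_def degree_monom_eq)
  then show ?thesis by (auto simp: mu_degree_le_def)
qed

lemma nu_degree_le_strict_mono: "nu_degree_le n \<subset> (nu_degree_le (Suc n) :: (gen list \<Rightarrow> 'k::field) set)"
proof -
  have "nu_witness n \<in> nu_degree_le (Suc n) - (nu_degree_le n :: (gen list \<Rightarrow> 'k) set)"
    using nu_witness_spec[of n, where 'k='k] by (simp add: nu_degree_le_def degree_monom_eq)
  then show ?thesis by (auto simp: nu_degree_le_def)
qed

theorem corollary5p6:
  shows "\<not> left_noetherian (A_alg :: (gen list \<Rightarrow> 'k::field) set ring) \<and>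
         \<not> right_noetherian (A_alg :: (gen list \<Rightarrow> 'k::field) set ring)"
proof -
  interpret ideal "genideal free_alg relations" "free_alg :: (gen list \<Rightarrow> 'k) ring"
    by (rule ideal_genideal_relations)
  have mu_sub: "genideal free_alg relations \<subseteq> (mu_degree_le n :: (gen list \<Rightarrow> 'k) set)"
    and nu_sub: "genideal free_alg relations \<subseteq> (nu_degree_le n :: (gen list \<Rightarrow> 'k) set)" for n
    using genideal_relations_subset by (auto simp: joint_kernel_def mu_degree_le_def nu_degree_le_def)
  show ?thesis
    unfolding A_alg_def
    using quotient_not_left_noetherian[of nu_degree_le, OF left_ideal_nu_degree_le nu_sub
        nu_degree_le_strict_mono]
      quotient_not_right_noetherian[of mu_degree_le, OF right_ideal_mu_degree_le mu_sub
        mu_degree_le_strict_mono]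
    by blast
qed

end
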